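(* Let $f(x)=\sum_{n\ge1}q_n x^n$ be a formal power series with complex coefficients and $q:=q_1\ne0$. For all integers $s\ge 0$ and $n\ge k\ge 0$, \[ \begin{bmatrix} n\\ k\end{bmatrix}_{\phi^s}=\frac{n!}{k!}\sum_{\vec L\in\mathcal P_{n-k}} C(\vec L)\prod_{p=1}^{n-k} q_{p+1}^{L_p}, \] where \[ C(\vec L):=\sum_{\vec\ell_1+\cdots+\vec\ell_s=\vec L} q^{\sum_{t=1}^s (s-t)\langle\vec\ell_t\rangle+sk-|\vec L|}\prod_{i=1}^s\binom{\sum_{t=1}^{i-1}\langle\vec\ell_t\rangle+k}{\vec\ell_i,\ \sum_{t=1}^{i-1}\langle\vec\ell_t\rangle+k-|\vec\ell_i|}, \] the sum being over all $s$-tuples $(\vec\ell_1,\dots,\vec\ell_s)$ of finitely supported sequences $\vec\ell_t\in\mathbb{N}^{\mathbb{N}^*}$ with $\vec\ell_1+\cdots+\vec\ell_s=\vec L$ (componentwise).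
   Context: For an integer $s\ge0$, $f^s$ is the $s$-fold compositional iterate of $f$ ($f^0(x)=x$), and $\begin{bmatrix} n\\ k\end{bmatrix}_{\phi^s}$ is defined by $\frac{f^s(x)^k}{k!}=\sum_{n\ge k}\begin{bmatrix} n\\ k\end{bmatrix}_{\phi^s}\frac{x^n}{n!}$. Multi-indices: $\vec\ell=(\ell_1,\ell_2,\dots)$ with $\ell_p\in\mathbb{N}$ and finitely many nonzero; $|\vec\ell|:=\sum_p\ell_p$ and $\langle\vec\ell\rangle:=\sum_p p\,\ell_p$. $\mathcal P_m$ is the set of such $\vec\ell$ with $\ell_p=0$ for $p>m$ and $\langle\vec\ell\rangle=m$. For an integer $N$ and multi-index $\vec\ell$, $\binom{N}{\vec\ell,\,r}:=\frac{N!}{\ell_1!\ell_2!\cdots\, r!}$ with $r=N-|\vec\ell|$, understood to be $0$ when $r<0$. *)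

theory Defs
  imports "HOL-Computational_Algebra.Formal_Power_Series"
begin

definition fps_iter :: "complex fps \<Rightarrow> nat \<Rightarrow> complex fps" where
  "fps_iter f s = ((\<lambda>g. fps_compose f g) ^^ s) fps_X"

definition phi_bracket :: "complex fps \<Rightarrow> nat \<Rightarrow> nat \<Rightarrow> nat \<Rightarrow> complex" where
  "phi_bracket f s n k = fact n * fps_nth (fps_const (1 / fact k) * (fps_iter f s) ^ k) n"

text \<open>Multi-indices (l_1, l_2, ...) are functions nat => nat with l 0 = 0 and finite support.\<close>
definition mi_abs :: "(nat \<Rightarrow> nat) \<Rightarrow> nat" where
  "mi_abs l = (\<Sum>p\<in>{p. l p \<noteq> 0}. l p)"

definition mi_wt :: "(nat \<Rightarrow> nat) \<Rightarrow> nat" where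
  "mi_wt l = (\<Sum>p\<in>{p. l p \<noteq> 0}. p * l p)"

definition mi_P :: "nat \<Rightarrow> (nat \<Rightarrow> nat) set" where
  "mi_P m = {l. l 0 = 0 \<and> (\<forall>p>m. l p = 0) \<and> mi_wt l = m}"

definition mi_multinom :: "nat \<Rightarrow> (nat \<Rightarrow> nat) \<Rightarrow> complex" where
  "mi_multinom N l = (if mi_abs l \<le> N then
      of_nat (fact N) / (of_nat ((\<Prod>p\<in>{p. l p \<noteq> 0}. fact (l p)) * fact (N - mi_abs l)))
    else 0)"

definition mi_decomp :: "nat \<Rightarrow> (nat \<Rightarrow> nat) \<Rightarrow> (nat \<Rightarrow> nat \<Rightarrow> nat) set" where
  "mi_decomp s L = {ls. (\<forall>t. t \<notin> {1..s} \<longrightarrow> ls t = (\<lambda>_. 0))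
      \<and> (\<forall>t\<in>{1..s}. ls t 0 = 0 \<and> finite {p. ls t p \<noteq> 0})
      \<and> (\<forall>p. (\<Sum>t=1..s. ls t p) = L p)}"

definition coeffC :: "complex fps \<Rightarrow> nat \<Rightarrow> nat \<Rightarrow> (nat \<Rightarrow> nat) \<Rightarrow> complex" where
  "coeffC f s k L = (\<Sum>ls\<in>mi_decomp s L.
      (fps_nth f 1) powi ((\<Sum>t=1..s. int (s - t) * int (mi_wt (ls t))) + int s * int k - int (mi_abs L))
      * (\<Prod>i=1..s. mi_multinom ((\<Sum>t=1..i-1. mi_wt (ls t)) + k) (ls i)))"

end

theory Submission
  imports Defs
begin

text \<open>Write \<open>f = X (q + q\<^sub>2 X + q\<^sub>3 X^2 + \<dots>)\<close>. By the multinomial theorem, the coefficient of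
  \<open>X^(N + m)\<close> in \<open>f^N\<close> is a sum over multi-indices \<open>l\<close> of weight \<open>m\<close> of
  \<open>binom(N; l, N - |l|) q^(N - |l|) \<Prod>\<^sub>p q\<^sub>p\<^sub>+\<^sub>1^(l\<^sub>p)\<close>; here it is proved by induction on \<open>N\<close> from a
  Pascal recurrence for multinomial coefficients. Since \<open>(f\<^sup>s\<^sup>+\<^sup>1)^k = f^k \<circ> f\<^sup>s\<close>, the coefficient of
  \<open>X^(k + M)\<close> in \<open>(f\<^sup>s\<^sup>+\<^sup>1)^k\<close> is \<open>\<Sum>\<^sub>m [X^(k + m)] f^k \<cdot> [X^(k + M)] (f\<^sup>s)^(k + m)\<close>, so by induction on
  \<open>s\<close> it is a sum over tuples \<open>(l\<^sub>1, \<dots>, l\<^sub>s)\<close>, the multi-index \<open>l\<^sub>i\<close> being chosen in the expansion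
  of the power \<open>k + \<langle>l\<^sub>1\<rangle> + \<dots> + \<langle>l\<^sub>i\<^sub>-\<^sub>1\<rangle>\<close>. Grouping the tuples by \<open>L = l\<^sub>1 + \<dots> + l\<^sub>s\<close> and
  collecting the powers of \<open>q\<close> gives \<open>C(L)\<close>.\<close>

section \<open>Finitely supported multi-indices\<close>

lemma sum_support_superset:
  fixes g :: "'b \<Rightarrow> nat \<Rightarrow> 'a::comm_monoid_add"
  assumes "finite A" "{p. l p \<noteq> 0} \<subseteq> A" "\<And>p. g p 0 = 0"
  shows "(\<Sum>p | l p \<noteq> 0. g p (l p)) = (\<Sum>p\<in>A. g p (l p))"
  using assms by (intro sum.mono_neutral_left) auto

lemma prod_support_superset:
  fixes g :: "'b \<Rightarrow> nat \<Rightarrow> 'a::comm_monoid_mult"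
  assumes "finite A" "{p. l p \<noteq> 0} \<subseteq> A" "\<And>p. g p 0 = 1"
  shows "(\<Prod>p | l p \<noteq> 0. g p (l p)) = (\<Prod>p\<in>A. g p (l p))"
  using assms by (intro prod.mono_neutral_left) auto

lemma finite_support_fun_upd:
  "finite {q. l q \<noteq> (0::nat)} \<Longrightarrow> finite {q. (l(p := v)) q \<noteq> 0}"
  by (rule finite_subset[of _ "insert p {q. l q \<noteq> 0}"]) auto

lemma sum_support_fun_upd:
  fixes g :: "'b \<Rightarrow> nat \<Rightarrow> 'a::comm_monoid_add"
  assumes fin: "finite {q. l q \<noteq> 0}" and g0: "\<And>q. g q 0 = 0"
  shows "(\<Sum>q | (l(p := v)) q \<noteq> 0. g q ((l(p := v)) q)) = g p v + (\<Sum>q\<in>{q. l q \<noteq> 0} - {p}. g q (l q))"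
proof -
  define A where "A = insert p {q. l q \<noteq> 0}"
  have A: "finite A" "p \<in> A" using fin by (auto simp: A_def)
  have "(\<Sum>q | (l(p := v)) q \<noteq> 0. g q ((l(p := v)) q)) = (\<Sum>q\<in>A. g q ((l(p := v)) q))"
    by (rule sum_support_superset) (use A g0 in \<open>auto simp: A_def\<close>)
  also have "\<dots> = g p v + (\<Sum>q\<in>A - {p}. g q (l q))"
    by (simp add: sum.remove[OF A])
  finally show ?thesis by (simp add: A_def)
qed

lemma prod_support_fun_upd:
  fixes g :: "'b \<Rightarrow> nat \<Rightarrow> 'a::comm_monoid_mult"
  assumes fin: "finite {q. l q \<noteq> 0}" and g0: "\<And>q. g q 0 = 1"
  shows "(\<Prod>q | (l(p := v)) q \<noteq> 0. g q ((l(p := v)) q)) = g p v * (\<Prod>q\<in>{q. l q \<noteq> 0} - {p}. g q (l q))"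
proof -
  define A where "A = insert p {q. l q \<noteq> 0}"
  have A: "finite A" "p \<in> A" using fin by (auto simp: A_def)
  have "(\<Prod>q | (l(p := v)) q \<noteq> 0. g q ((l(p := v)) q)) = (\<Prod>q\<in>A. g q ((l(p := v)) q))"
    by (rule prod_support_superset) (use A g0 in \<open>auto simp: A_def\<close>)
  also have "\<dots> = g p v * (\<Prod>q\<in>A - {p}. g q (l q))"
    by (simp add: prod.remove[OF A])
  finally show ?thesis by (simp add: A_def)
qed

lemma mi_abs_fun_upd:
  "finite {q. l q \<noteq> 0} \<Longrightarrow> mi_abs (l(p := v)) + l p = mi_abs l + v"
  unfolding mi_abs_def
  using sum_support_fun_upd[of l "\<lambda>_ x. x" p v] sum_support_fun_upd[of l "\<lambda>_ x. x" p "l p"] by simp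

lemma mi_wt_fun_upd:
  "finite {q. l q \<noteq> 0} \<Longrightarrow> mi_wt (l(p := v)) + p * l p = mi_wt l + p * v"
  unfolding mi_wt_def
  using sum_support_fun_upd[of l "\<lambda>p x. p * x" p v] sum_support_fun_upd[of l "\<lambda>p x. p * x" p "l p"] by simp

lemma sum_support_sum:
  fixes c :: "'b \<Rightarrow> nat"
  assumes "finite T" "\<And>t. t \<in> T \<Longrightarrow> finite {p. ls t p \<noteq> 0}"
  shows "(\<Sum>p | (\<Sum>t\<in>T. ls t p) \<noteq> 0. c p * (\<Sum>t\<in>T. ls t p)) = (\<Sum>t\<in>T. \<Sum>p | ls t p \<noteq> 0. c p * ls t p)"
proof -
  define A where "A = (\<Union>t\<in>T. {p. ls t p \<noteq> 0})"
  have A: "finite A" using assms by (simp add: A_def)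
  have supp: "{p. (\<Sum>t\<in>T. ls t p) \<noteq> 0} \<subseteq> A" using assms(1) by (auto simp: A_def)
  have "(\<Sum>p | (\<Sum>t\<in>T. ls t p) \<noteq> 0. c p * (\<Sum>t\<in>T. ls t p)) = (\<Sum>p\<in>A. \<Sum>t\<in>T. c p * ls t p)"
    using sum_support_superset[OF A supp, of "\<lambda>p x. c p * x"] by (simp add: sum_distrib_left)
  also have "\<dots> = (\<Sum>t\<in>T. \<Sum>p\<in>A. c p * ls t p)"
    by (rule sum.swap)
  also have "\<dots> = (\<Sum>t\<in>T. \<Sum>p | ls t p \<noteq> 0. c p * ls t p)"
    by (rule sum.cong[OF refl], rule sum_support_superset[OF A, symmetric]) (auto simp: A_def)
  finally show ?thesis .
qed

lemma mi_wt_sum: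
  "finite T \<Longrightarrow> (\<And>t. t \<in> T \<Longrightarrow> finite {p. ls t p \<noteq> 0})
    \<Longrightarrow> mi_wt (\<lambda>p. \<Sum>t\<in>T. ls t p) = (\<Sum>t\<in>T. mi_wt (ls t))"
  unfolding mi_wt_def by (rule sum_support_sum)

lemma mi_abs_sum:
  "finite T \<Longrightarrow> (\<And>t. t \<in> T \<Longrightarrow> finite {p. ls t p \<noteq> 0})
    \<Longrightarrow> mi_abs (\<lambda>p. \<Sum>t\<in>T. ls t p) = (\<Sum>t\<in>T. mi_abs (ls t))"
  unfolding mi_abs_def using sum_support_sum[of T ls "\<lambda>_. 1"] by simp

lemma prod_power_support_sum:
  fixes a :: "nat \<Rightarrow> 'a::comm_monoid_mult"
  assumes "finite T" "\<And>t. t \<in> T \<Longrightarrow> finite {p. ls t p \<noteq> 0}"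
  shows "(\<Prod>p | (\<Sum>t\<in>T. ls t p) \<noteq> 0. a p ^ (\<Sum>t\<in>T. ls t p)) = (\<Prod>t\<in>T. \<Prod>p | ls t p \<noteq> 0. a p ^ ls t p)"
proof -
  define A where "A = (\<Union>t\<in>T. {p. ls t p \<noteq> 0})"
  have A: "finite A" using assms by (simp add: A_def)
  have supp: "{p. (\<Sum>t\<in>T. ls t p) \<noteq> 0} \<subseteq> A" using assms(1) by (auto simp: A_def)
  have "(\<Prod>p | (\<Sum>t\<in>T. ls t p) \<noteq> 0. a p ^ (\<Sum>t\<in>T. ls t p)) = (\<Prod>p\<in>A. \<Prod>t\<in>T. a p ^ ls t p)"
    using prod_support_superset[OF A supp, of "\<lambda>p x. a p ^ x"] by (simp add: power_sum)
  also have "\<dots> = (\<Prod>t\<in>T. \<Prod>p\<in>A. a p ^ ls t p)"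
    by (rule prod.swap)
  also have "\<dots> = (\<Prod>t\<in>T. \<Prod>p | ls t p \<noteq> 0. a p ^ ls t p)"
    by (rule prod.cong[OF refl], rule prod_support_superset[OF A, symmetric]) (auto simp: A_def)
  finally show ?thesis .
qed

lemma mi_wt_ge: "finite {q. l q \<noteq> 0} \<Longrightarrow> p * l p \<le> mi_wt l"
  unfolding mi_wt_def by (cases "l p = 0") (auto intro: member_le_sum)

lemma mi_PI:
  assumes "l 0 = 0" "finite {p. l p \<noteq> 0}" "mi_wt l = m"
  shows "l \<in> mi_P m"
proof -
  have "l p = 0" if "p > m" for p
  proof (rule ccontr)
    assume "l p \<noteq> 0"
    then have "p \<le> p * l p" by simp
    with mi_wt_ge[OF assms(2), of p] assms(3) that show False by linarith
  qed
  then show ?thesis using assms unfolding mi_P_def by auto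
qed

lemma mi_wt_mi_P: "l \<in> mi_P m \<Longrightarrow> mi_wt l = m"
  by (simp add: mi_P_def)

lemma mi_P_support: "l \<in> mi_P m \<Longrightarrow> {p. l p \<noteq> 0} \<subseteq> {1..m}"
  unfolding mi_P_def by (auto simp: not_less[symmetric] Suc_le_eq) (metis neq0_conv)

lemma finite_support_mi_P: "l \<in> mi_P m \<Longrightarrow> finite {p. l p \<noteq> 0}"
  using mi_P_support finite_subset by blast

lemma finite_mi_P: "finite (mi_P m)"
proof (rule finite_subset)
  show "mi_P m \<subseteq> {l. \<forall>p. (p \<in> {1..m} \<longrightarrow> l p \<in> {0..m}) \<and> (p \<notin> {1..m} \<longrightarrow> l p = 0)}"
  proof safe
    fix l p assume l: "l \<in> mi_P m"
    show "l p = 0" if "p \<notin> {1..m}" using mi_P_support[OF l] that by auto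
    show "l p \<in> {0..m}" if "p \<in> {1..m}"
    proof -
      have "l p \<le> p * l p" using that by simp
      also have "\<dots> \<le> mi_wt l" by (rule mi_wt_ge[OF finite_support_mi_P[OF l]])
      also have "\<dots> = m" by (rule mi_wt_mi_P[OF l])
      finally show ?thesis by simp
    qed
  qed
qed (rule finite_set_of_finite_funs; simp)

lemma sum_mi_P_decrement:
  assumes p: "p \<in> {1..m}"
  shows "(\<Sum>l\<in>{l\<in>mi_P m. 0 < l p}. g (l(p := l p - 1))) = (\<Sum>l\<in>mi_P (m - p). g l)"
proof (rule sum.reindex_bij_witness[where i = "\<lambda>l. l(p := Suc (l p))" and j = "\<lambda>l. l(p := l p - 1)"])
  fix l assume "l \<in> {l\<in>mi_P m. 0 < l p}"
  then have l: "l \<in> mi_P m" "0 < l p" by auto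
  then show "(l(p := l p - 1))(p := Suc ((l(p := l p - 1)) p)) = l" by auto
  have fin: "finite {q. l q \<noteq> 0}" using finite_support_mi_P[OF l(1)] .
  have "mi_wt (l(p := l p - 1)) + p * l p = m + p * (l p - 1)"
    using mi_wt_fun_upd[OF fin] mi_wt_mi_P[OF l(1)] by simp
  moreover have "p * l p = p * (l p - 1) + p" using l(2) by (cases "l p") auto
  ultimately have "mi_wt (l(p := l p - 1)) = m - p" by linarith
  moreover have "(l(p := l p - 1)) 0 = 0" using l(1) p by (auto simp: mi_P_def)
  ultimately show "l(p := l p - 1) \<in> mi_P (m - p)"
    using mi_PI finite_support_fun_upd[OF fin] by blast
next
  fix l assume l: "l \<in> mi_P (m - p)"
  then show "(l(p := Suc (l p)))(p := (l(p := Suc (l p))) p - 1) = l" by auto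
  have fin: "finite {q. l q \<noteq> 0}" using finite_support_mi_P[OF l] .
  have "mi_wt (l(p := Suc (l p))) = m"
    using mi_wt_fun_upd[OF fin, of p "Suc (l p)"] mi_wt_mi_P[OF l] p by simp
  moreover have "(l(p := Suc (l p))) 0 = 0" using l p by (auto simp: mi_P_def)
  ultimately show "l(p := Suc (l p)) \<in> {l\<in>mi_P m. 0 < l p}"
    using mi_PI finite_support_fun_upd[OF fin] by auto
qed simp

section \<open>Multinomial expansion of powers\<close>

definition mi_fact :: "(nat \<Rightarrow> nat) \<Rightarrow> nat" where
  "mi_fact l = (\<Prod>p | l p \<noteq> 0. fact (l p))"

lemma mi_fact_pos: "mi_fact l > 0"
  by (simp add: mi_fact_def prod_pos)

lemma mi_abs_decrement:
  "finite {q. l q \<noteq> 0} \<Longrightarrow> l p \<noteq> 0 \<Longrightarrow> Suc (mi_abs (l(p := l p - 1))) = mi_abs l"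
  using mi_abs_fun_upd[of l p "l p - 1"] by simp

lemma mi_fact_decrement:
  assumes fin: "finite {q. l q \<noteq> 0}" and p: "l p \<noteq> 0"
  shows "mi_fact l = l p * mi_fact (l(p := l p - 1))"
proof -
  define R where "R = (\<Prod>q\<in>{q. l q \<noteq> 0} - {p}. fact (l q) :: nat)"
  have "mi_fact (l(p := l p - 1)) = fact (l p - 1) * R"
    unfolding mi_fact_def R_def by (rule prod_support_fun_upd[OF fin]) simp
  moreover have "mi_fact l = fact (l p) * R"
    using prod_support_fun_upd[OF fin, of "\<lambda>_. fact" p "l p"] by (simp add: mi_fact_def R_def)
  moreover have "fact (l p) = l p * fact (l p - 1)"
    using p by (metis fact_nonzero fact_num_eq_if of_nat_id)
  ultimately show ?thesis by simp
qed

lemma mi_multinom_mult: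
  "mi_abs l \<le> N \<Longrightarrow> mi_multinom N l * of_nat (mi_fact l * fact (N - mi_abs l)) = fact N"
  unfolding mi_multinom_def mi_fact_def[symmetric] using mi_fact_pos[of l] by simp

lemma mi_multinom_eq_0: "\<not> mi_abs l \<le> N \<Longrightarrow> mi_multinom N l = 0"
  by (simp add: mi_multinom_def)

lemma mi_multinom_Suc:
  assumes fin: "finite {p. l p \<noteq> 0}"
  shows "mi_multinom (Suc N) l
       = mi_multinom N l + (\<Sum>p | l p \<noteq> 0. mi_multinom N (l(p := l p - 1)))"
proof (cases "mi_abs l \<le> Suc N")
  case False
  have "mi_multinom N (l(p := l p - 1)) = 0" if "l p \<noteq> 0" for p
    using mi_abs_decrement[OF fin that] False by (intro mi_multinom_eq_0) simp
  with False show ?thesis by (simp add: mi_multinom_eq_0)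
next
  case True
  define S where "S = mi_abs l"
  define c :: complex where "c = of_nat (mi_fact l * fact (Suc N - S))"
  have "c \<noteq> 0" using mi_fact_pos[of l] by (simp add: c_def)
  have lhs: "mi_multinom (Suc N) l * c = of_nat (Suc N) * fact N"
    using mi_multinom_mult[of l "Suc N"] True by (simp add: c_def S_def)
  have keep: "mi_multinom N l * c = of_nat (Suc N - S) * fact N"
  proof (cases "S \<le> N")
    case True
    then have "mi_fact l * fact (Suc N - S) = (Suc N - S) * (mi_fact l * fact (N - S))"
      by (simp add: Suc_diff_le algebra_simps)
    then have "c = of_nat (Suc N - S) * of_nat (mi_fact l * fact (N - S))"
      unfolding c_def by (simp only: of_nat_mult)
    then show ?thesis using mi_multinom_mult[of l N] True by (simp add: S_def)
  qed (use True in \<open>simp add: S_def mi_multinom_eq_0\<close>)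
  have drop: "mi_multinom N (l(p := l p - 1)) * c = of_nat (l p) * fact N" if p: "l p \<noteq> 0" for p
  proof -
    define l' where "l' = l(p := l p - 1)"
    have abs: "Suc (mi_abs l') = S" using mi_abs_decrement[OF fin p] by (simp add: l'_def S_def)
    have "mi_fact l = l p * mi_fact l'" using mi_fact_decrement[OF fin p] by (simp add: l'_def)
    moreover have "Suc N - S = N - mi_abs l'" using abs by auto
    ultimately have "c = of_nat (l p) * of_nat (mi_fact l' * fact (N - mi_abs l'))"
      by (simp add: c_def)
    then show ?thesis using mi_multinom_mult[of l' N] abs True by (simp add: S_def l'_def)
  qed
  have "(\<Sum>p | l p \<noteq> 0. mi_multinom N (l(p := l p - 1))) * c = (\<Sum>p | l p \<noteq> 0. of_nat (l p)) * fact N"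
    unfolding sum_distrib_right by (rule sum.cong[OF refl], rule drop) simp
  then have "(mi_multinom N l + (\<Sum>p | l p \<noteq> 0. mi_multinom N (l(p := l p - 1)))) * c
      = of_nat (Suc N - S) * fact N + (\<Sum>p | l p \<noteq> 0. of_nat (l p)) * fact N"
    by (simp add: distrib_right keep)
  also have "\<dots> = of_nat (Suc N) * fact N"
    using True by (simp add: S_def mi_abs_def flip: distrib_right of_nat_add)
  finally show ?thesis using lhs \<open>c \<noteq> 0\<close> by (metis mult_right_cancel)
qed

text \<open>With \<open>f = X (q + q\<^sub>2 X + q\<^sub>3 X^2 + \<dots>)\<close>, this is the contribution to the coefficient of
  \<open>X^(N + m)\<close> in \<open>f^N\<close> of the choices taking \<open>q\<^sub>p\<^sub>+\<^sub>1 X^p\<close> from \<open>l p\<close> of the \<open>N\<close> factors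
  and \<open>q\<close> from the remaining \<open>N - |l|\<close> ones.\<close>
definition multinom_term :: "complex fps \<Rightarrow> nat \<Rightarrow> (nat \<Rightarrow> nat) \<Rightarrow> complex" where
  "multinom_term f N l = mi_multinom N l * fps_nth f 1 ^ (N - mi_abs l)
     * (\<Prod>p | l p \<noteq> 0. fps_nth f (p + 1) ^ l p)"

lemma multinom_term_Suc:
  assumes fin: "finite {q. l q \<noteq> 0}"
  shows "multinom_term f (Suc N) l = fps_nth f 1 * multinom_term f N l
           + (\<Sum>p | l p \<noteq> 0. fps_nth f (p + 1) * multinom_term f N (l(p := l p - 1)))"
proof -
  define q where "q = fps_nth f 1"
  define X where "X l' = (\<Prod>p | l' p \<noteq> 0. fps_nth f (p + 1) ^ l' p)" for l'
  have term_eq: "multinom_term f N' l' = mi_multinom N' l' * q ^ (N' - mi_abs l') * X l'" for N' l'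
    by (simp add: multinom_term_def q_def X_def)
  have keep: "mi_multinom N l * q ^ (Suc N - mi_abs l) * X l = q * multinom_term f N l"
  proof (cases "mi_abs l \<le> N")
    case True
    then show ?thesis by (simp add: term_eq Suc_diff_le)
  qed (simp add: term_eq mi_multinom_eq_0)
  have drop: "mi_multinom N (l(p := l p - 1)) * q ^ (Suc N - mi_abs l) * X l
      = fps_nth f (p + 1) * multinom_term f N (l(p := l p - 1))" if p: "l p \<noteq> 0" for p
  proof -
    define l' where "l' = l(p := l p - 1)"
    define R where "R = (\<Prod>q\<in>{q. l q \<noteq> 0} - {p}. fps_nth f (q + 1) ^ l q)"
    have "X l' = fps_nth f (p + 1) ^ (l p - 1) * R"
      unfolding X_def R_def l'_def by (rule prod_support_fun_upd[OF fin]) simp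
    moreover have "X l = fps_nth f (p + 1) ^ l p * R"
      using prod_support_fun_upd[OF fin, of "\<lambda>q x. fps_nth f (q + 1) ^ x" p "l p"]
      by (simp add: X_def R_def)
    ultimately have "X l = fps_nth f (p + 1) * X l'"
      using p by (simp add: power_eq_if)
    moreover have "Suc N - mi_abs l = N - mi_abs l'"
      using mi_abs_decrement[OF fin p] by (auto simp: l'_def)
    ultimately show ?thesis by (simp add: term_eq l'_def)
  qed
  have "multinom_term f (Suc N) l = (mi_multinom N l
      + (\<Sum>p | l p \<noteq> 0. mi_multinom N (l(p := l p - 1)))) * q ^ (Suc N - mi_abs l) * X l"
    by (simp add: term_eq mi_multinom_Suc[OF fin])
  also have "\<dots> = q * multinom_term f N l
      + (\<Sum>p | l p \<noteq> 0. fps_nth f (p + 1) * multinom_term f N (l(p := l p - 1)))"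
    unfolding distrib_right sum_distrib_right keep
    by (rule arg_cong[where f = "(+) _"], rule sum.cong[OF refl], rule drop) simp
  finally show ?thesis by (simp add: q_def)
qed

lemma mi_abs_eq_0_iff: "finite {p. l p \<noteq> 0} \<Longrightarrow> mi_abs l = 0 \<longleftrightarrow> l = (\<lambda>_. 0)"
  unfolding mi_abs_def by (auto simp: fun_eq_iff)

lemma zero_mi_P_iff: "(\<lambda>_. 0) \<in> mi_P m \<longleftrightarrow> m = 0"
  by (simp add: mi_P_def mi_wt_def)

lemma multinom_term_0:
  "finite {p. l p \<noteq> 0} \<Longrightarrow> multinom_term f 0 l = (if l = (\<lambda>_. 0) then 1 else 0)"
  using mi_abs_eq_0_iff[of l]
  by (auto simp: multinom_term_def mi_multinom_eq_0) (simp add: mi_multinom_def)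

lemma fps_nth_power_Suc_shift:
  fixes f :: "'a::comm_ring_1 fps"
  assumes f0: "fps_nth f 0 = 0"
  shows "fps_nth (f ^ Suc N) (Suc N + m) = fps_nth f 1 * fps_nth (f ^ N) (N + m)
           + (\<Sum>p=1..m. fps_nth f (p + 1) * fps_nth (f ^ N) (N + (m - p)))"
proof -
  have "fps_nth (f ^ Suc N) (Suc N + m) = (\<Sum>i=0..Suc N + m. fps_nth f i * fps_nth (f ^ N) (Suc N + m - i))"
    by (simp add: fps_mult_nth)
  also have "\<dots> = (\<Sum>i=Suc 0..Suc m. fps_nth f i * fps_nth (f ^ N) (Suc N + m - i))"
  proof (rule sum.mono_neutral_right)
    show "\<forall>i\<in>{0..Suc N + m} - {Suc 0..Suc m}. fps_nth f i * fps_nth (f ^ N) (Suc N + m - i) = 0"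
      using f0 startsby_zero_power_prefix[OF f0, of N] by (auto simp: not_le)
  qed auto
  also have "\<dots> = (\<Sum>p=0..m. fps_nth f (Suc p) * fps_nth (f ^ N) (Suc N + m - Suc p))"
    by (rule sum.shift_bounds_cl_Suc_ivl)
  also have "\<dots> = (\<Sum>p=0..m. fps_nth f (p + 1) * fps_nth (f ^ N) (N + (m - p)))"
    by (rule sum.cong) auto
  also have "\<dots> = fps_nth f 1 * fps_nth (f ^ N) (N + m) + (\<Sum>p=1..m. fps_nth f (p + 1) * fps_nth (f ^ N) (N + (m - p)))"
    by (simp add: sum.atLeast_Suc_atMost)
  finally show ?thesis .
qed

lemma fps_nth_power_eq_sum_multinom_term:
  assumes f0: "fps_nth f 0 = 0"
  shows "fps_nth (f ^ N) (N + m) = (\<Sum>l\<in>mi_P m. multinom_term f N l)"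
proof (induction N arbitrary: m)
  case 0
  have "(\<Sum>l\<in>mi_P m. multinom_term f 0 l) = (\<Sum>l\<in>mi_P m. if l = (\<lambda>_. 0) then 1 else 0)"
    using finite_support_mi_P by (intro sum.cong) (auto simp: multinom_term_0)
  also have "\<dots> = (if m = 0 then 1 else 0)"
    by (simp add: finite_mi_P zero_mi_P_iff)
  finally show ?case by simp
next
  case (Suc N)
  define G where "G p l = fps_nth f (p + 1) * multinom_term f N (l(p := l p - 1))" for p l
  have "(\<Sum>l\<in>mi_P m. \<Sum>p | l p \<noteq> 0. G p l) = (\<Sum>l\<in>mi_P m. \<Sum>p=1..m. if 0 < l p then G p l else 0)"
  proof (rule sum.cong)
    fix l assume "l \<in> mi_P m"
    then have "{p. l p \<noteq> 0} = {p\<in>{1..m}. 0 < l p}" using mi_P_support by blast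
    then show "(\<Sum>p | l p \<noteq> 0. G p l) = (\<Sum>p=1..m. if 0 < l p then G p l else 0)"
      by (simp only: sum.inter_filter[OF finite_atLeastAtMost])
  qed simp
  also have "\<dots> = (\<Sum>p=1..m. \<Sum>l\<in>{l\<in>mi_P m. 0 < l p}. G p l)"
    by (simp add: sum.swap[of _ "mi_P m"] sum.inter_filter finite_mi_P)
  also have "\<dots> = (\<Sum>p=1..m. fps_nth f (p + 1) * fps_nth (f ^ N) (N + (m - p)))"
  proof (rule sum.cong)
    fix p assume p: "p \<in> {1..m}"
    have "(\<Sum>l\<in>{l\<in>mi_P m. 0 < l p}. G p l) = fps_nth f (p + 1) * (\<Sum>l\<in>mi_P (m - p). multinom_term f N l)"
      by (simp only: G_def sum_distrib_left[symmetric] sum_mi_P_decrement[OF p])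
    then show "(\<Sum>l\<in>{l\<in>mi_P m. 0 < l p}. G p l) = fps_nth f (p + 1) * fps_nth (f ^ N) (N + (m - p))"
      by (simp only: Suc.IH)
  qed simp
  finally have "(\<Sum>l\<in>mi_P m. \<Sum>p | l p \<noteq> 0. G p l)
      = (\<Sum>p=1..m. fps_nth f (p + 1) * fps_nth (f ^ N) (N + (m - p)))" .
  moreover have "(\<Sum>l\<in>mi_P m. multinom_term f (Suc N) l)
      = (\<Sum>l\<in>mi_P m. fps_nth f 1 * multinom_term f N l + (\<Sum>p | l p \<noteq> 0. G p l))"
    unfolding G_def by (rule sum.cong[OF refl], rule multinom_term_Suc, rule finite_support_mi_P)
  ultimately show ?case
    unfolding fps_nth_power_Suc_shift[OF f0] by (simp add: sum.distrib Suc.IH sum_distrib_left)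
qed

section \<open>Powers of iterates as sums over tuples of multi-indices\<close>

lemma sum_atLeast1_atMost_Suc: "(\<Sum>t=1..Suc s. g t) = g 1 + (\<Sum>t=1..s. g (Suc t))"
  using sum.atLeast_Suc_atMost[of 1 "Suc s" g] sum.atLeast_Suc_atMost_Suc_shift[of g 1 s] by simp

lemma prod_atLeast1_atMost_Suc: "(\<Prod>t=1..Suc s. g t) = g 1 * (\<Prod>t=1..s. g (Suc t))"
  using prod.atLeast_Suc_atMost[of 1 "Suc s" g] prod.atLeast_Suc_atMost_Suc_shift[of g 1 s] by simp

definition mi_tuples :: "nat \<Rightarrow> nat \<Rightarrow> (nat \<Rightarrow> nat \<Rightarrow> nat) set" where
  "mi_tuples s M = {ls. (\<forall>t. t \<notin> {1..s} \<longrightarrow> ls t = (\<lambda>_. 0))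
      \<and> (\<forall>t\<in>{1..s}. ls t 0 = 0 \<and> finite {p. ls t p \<noteq> 0})
      \<and> (\<Sum>t=1..s. mi_wt (ls t)) = M}"

definition tuple_cons :: "(nat \<Rightarrow> nat) \<Rightarrow> (nat \<Rightarrow> nat \<Rightarrow> nat) \<Rightarrow> nat \<Rightarrow> nat \<Rightarrow> nat" where
  "tuple_cons l ls = (\<lambda>t. if t = 0 then (\<lambda>_. 0) else if t = 1 then l else ls (t - 1))"

definition tuple_tail :: "(nat \<Rightarrow> nat \<Rightarrow> nat) \<Rightarrow> nat \<Rightarrow> nat \<Rightarrow> nat" where
  "tuple_tail ls = (\<lambda>t. if t = 0 then (\<lambda>_. 0) else ls (Suc t))"

text \<open>Expanding \<open>(f \<circ> \<dots> \<circ> f)^k\<close> from the outside in, the \<open>i\<close>-th copy of \<open>f\<close> occurs to the power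
  \<open>k + \<langle>l\<^sub>1\<rangle> + \<dots> + \<langle>l\<^sub>i\<^sub>-\<^sub>1\<rangle>\<close>, and \<open>l\<^sub>i\<close> records the choices made in expanding that power.\<close>
definition tuple_term :: "complex fps \<Rightarrow> nat \<Rightarrow> nat \<Rightarrow> (nat \<Rightarrow> nat \<Rightarrow> nat) \<Rightarrow> complex" where
  "tuple_term f s k ls = (\<Prod>i=1..s. multinom_term f ((\<Sum>t=1..i-1. mi_wt (ls t)) + k) (ls i))"

definition tuple_sum :: "complex fps \<Rightarrow> nat \<Rightarrow> nat \<Rightarrow> nat \<Rightarrow> complex" where
  "tuple_sum f s k M = (\<Sum>ls\<in>mi_tuples s M. tuple_term f s k ls)"

lemma mi_tuples_0: "mi_tuples 0 M = (if M = 0 then {\<lambda>_ _. 0} else {})"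
  unfolding mi_tuples_def by (auto simp: mi_wt_def)

lemma tuple_tail_cons: "ls \<in> mi_tuples s M \<Longrightarrow> tuple_tail (tuple_cons l ls) = ls"
  unfolding tuple_tail_def tuple_cons_def mi_tuples_def by (rule ext) auto

lemma tuple_cons_tail: "ls \<in> mi_tuples (Suc s) M \<Longrightarrow> tuple_cons (ls 1) (tuple_tail ls) = ls"
  unfolding tuple_tail_def tuple_cons_def mi_tuples_def by (rule ext) auto

lemma tuple_cons_mem_mi_tuples:
  assumes l: "l \<in> mi_P m" and ls: "ls \<in> mi_tuples s (M - m)" and m: "m \<le> M"
  shows "tuple_cons l ls \<in> mi_tuples (Suc s) M"
proof -
  have "(\<Sum>t=1..Suc s. mi_wt (tuple_cons l ls t)) = mi_wt l + (\<Sum>t=1..s. mi_wt (ls t))"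
    unfolding sum_atLeast1_atMost_Suc by (simp add: tuple_cons_def)
  also have "\<dots> = M" using ls m mi_wt_mi_P[OF l] unfolding mi_tuples_def by simp
  finally show ?thesis
    using l ls finite_support_mi_P[OF l] unfolding mi_tuples_def mi_P_def tuple_cons_def
    by (auto simp: not_le)
qed

lemma tuple_tail_mem_mi_tuples:
  assumes ls: "ls \<in> mi_tuples (Suc s) M"
  shows "ls 1 \<in> mi_P (mi_wt (ls 1))" and "mi_wt (ls 1) \<le> M"
    and "tuple_tail ls \<in> mi_tuples s (M - mi_wt (ls 1))"
proof -
  have sum: "mi_wt (ls 1) + (\<Sum>t=1..s. mi_wt (ls (Suc t))) = M"
    using ls unfolding mi_tuples_def sum_atLeast1_atMost_Suc by simp
  then show "mi_wt (ls 1) \<le> M" by simp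
  show "ls 1 \<in> mi_P (mi_wt (ls 1))"
    using ls by (intro mi_PI) (auto simp: mi_tuples_def)
  show "tuple_tail ls \<in> mi_tuples s (M - mi_wt (ls 1))"
    using ls sum unfolding mi_tuples_def tuple_tail_def by auto
qed

lemma bij_betw_tuple_cons:
  "bij_betw (\<lambda>(l, ls). tuple_cons l ls)
     (SIGMA l:(\<Union>m\<in>{0..M}. mi_P m). mi_tuples s (M - mi_wt l)) (mi_tuples (Suc s) M)"
proof (rule bij_betw_byWitness[where f' = "\<lambda>ls. (ls 1, tuple_tail ls)"])
  let ?S = "SIGMA l:(\<Union>m\<in>{0..M}. mi_P m). mi_tuples s (M - mi_wt l)"
  show "\<forall>a\<in>?S. (\<lambda>ls. (ls 1, tuple_tail ls)) ((\<lambda>(l, ls). tuple_cons l ls) a) = a"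
    by (auto simp: tuple_tail_cons) (simp add: tuple_cons_def)
  show "\<forall>ls\<in>mi_tuples (Suc s) M. (\<lambda>(l, ls). tuple_cons l ls) ((\<lambda>ls. (ls 1, tuple_tail ls)) ls) = ls"
    using tuple_cons_tail by auto
  show "(\<lambda>(l, ls). tuple_cons l ls) ` ?S \<subseteq> mi_tuples (Suc s) M"
    by (auto simp: mi_wt_mi_P intro: tuple_cons_mem_mi_tuples)
  show "(\<lambda>ls. (ls 1, tuple_tail ls)) ` mi_tuples (Suc s) M \<subseteq> ?S"
    using tuple_tail_mem_mi_tuples by fastforce
qed

lemma finite_mi_tuples: "finite (mi_tuples s M)"
proof (induction s arbitrary: M)
  case 0
  then show ?case by (simp add: mi_tuples_0)
next
  case (Suc s)
  have "finite (SIGMA l:(\<Union>m\<in>{0..M}. mi_P m). mi_tuples s (M - mi_wt l))"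
    by (intro finite_SigmaI finite_UN_I) (auto simp: finite_mi_P Suc.IH)
  then show ?case using bij_betw_finite[OF bij_betw_tuple_cons] by blast
qed

lemma tuple_term_cons:
  "tuple_term f (Suc s) k (tuple_cons l ls) = multinom_term f k l * tuple_term f s (k + mi_wt l) ls"
proof -
  have "(\<Sum>t=1..i. mi_wt (tuple_cons l ls t)) = mi_wt l + (\<Sum>t=1..i-1. mi_wt (ls t))"
    if "i \<in> {1..s}" for i
    using that sum_atLeast1_atMost_Suc[of "\<lambda>t. mi_wt (tuple_cons l ls t)" "i - 1"]
    by (simp add: tuple_cons_def)
  then show ?thesis
    unfolding tuple_term_def prod_atLeast1_atMost_Suc
    by (auto simp: tuple_cons_def ac_simps intro!: prod.cong)
qed

lemma tuple_sum_0: "tuple_sum f 0 k M = (if M = 0 then 1 else 0)"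
  by (simp add: tuple_sum_def tuple_term_def mi_tuples_0)

lemma tuple_sum_Suc:
  "tuple_sum f (Suc s) k M = (\<Sum>m=0..M. \<Sum>l\<in>mi_P m. multinom_term f k l * tuple_sum f s (k + m) (M - m))"
proof -
  have "tuple_sum f (Suc s) k M = (\<Sum>x\<in>(SIGMA l:(\<Union>m\<in>{0..M}. mi_P m). mi_tuples s (M - mi_wt l)).
          tuple_term f (Suc s) k ((\<lambda>(l, ls). tuple_cons l ls) x))"
    unfolding tuple_sum_def by (rule sum.reindex_bij_betw[OF bij_betw_tuple_cons, symmetric])
  also have "\<dots> = (\<Sum>l\<in>(\<Union>m\<in>{0..M}. mi_P m). \<Sum>ls\<in>mi_tuples s (M - mi_wt l). tuple_term f (Suc s) k (tuple_cons l ls))"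
    by (subst sum.Sigma) (auto simp: finite_mi_P finite_mi_tuples split_def)
  also have "\<dots> = (\<Sum>m=0..M. \<Sum>l\<in>mi_P m. \<Sum>ls\<in>mi_tuples s (M - mi_wt l). tuple_term f (Suc s) k (tuple_cons l ls))"
    by (rule sum.UNION_disjoint) (auto simp: finite_mi_P dest: mi_wt_mi_P)
  also have "\<dots> = (\<Sum>m=0..M. \<Sum>l\<in>mi_P m. multinom_term f k l * tuple_sum f s (k + m) (M - m))"
    unfolding tuple_sum_def by (intro sum.cong refl) (simp add: tuple_term_cons mi_wt_mi_P sum_distrib_left)
  finally show ?thesis .
qed

lemma fps_iter_Suc: "fps_iter f (Suc s) = fps_compose f (fps_iter f s)"
  by (simp add: fps_iter_def)

lemma fps_nth_iter_0: "fps_nth f 0 = 0 \<Longrightarrow> fps_nth (fps_iter f s) 0 = 0"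
  by (induction s) (simp_all add: fps_iter_Suc, simp add: fps_iter_def)

lemma fps_nth_iter_power:
  assumes f0: "fps_nth f 0 = 0"
  shows "fps_nth (fps_iter f s ^ k) (k + M) = tuple_sum f s k M"
proof (induction s arbitrary: k M)
  case 0
  then show ?case by (simp add: tuple_sum_0 fps_iter_def)
next
  case (Suc s)
  define g where "g = fps_iter f s"
  have g0: "fps_nth g 0 = 0" unfolding g_def by (rule fps_nth_iter_0[OF f0])
  have "fps_nth (fps_iter f (Suc s) ^ k) (k + M) = fps_nth (f ^ k oo g) (k + M)"
    unfolding fps_iter_Suc g_def[symmetric] fps_compose_power[OF g0] ..
  also have "\<dots> = (\<Sum>j=0..k + M. fps_nth (f ^ k) j * fps_nth (g ^ j) (k + M))"
    by (rule fps_compose_nth)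
  also have "\<dots> = (\<Sum>j=k..k + M. fps_nth (f ^ k) j * fps_nth (g ^ j) (k + M))"
    by (rule sum.mono_neutral_right) (use startsby_zero_power_prefix[OF f0, of k] in auto)
  also have "\<dots> = (\<Sum>m=0..M. fps_nth (f ^ k) (m + k) * fps_nth (g ^ (m + k)) (k + M))"
    using sum.shift_bounds_cl_nat_ivl[of "\<lambda>j. fps_nth (f ^ k) j * fps_nth (g ^ j) (k + M)" 0 k M]
    by (simp add: add.commute)
  also have "\<dots> = (\<Sum>m=0..M. (\<Sum>l\<in>mi_P m. multinom_term f k l) * tuple_sum f s (k + m) (M - m))"
  proof (rule sum.cong)
    fix m assume "m \<in> {0..M}"
    then have "k + M = (k + m) + (M - m)" by simp
    then show "fps_nth (f ^ k) (m + k) * fps_nth (g ^ (m + k)) (k + M)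
        = (\<Sum>l\<in>mi_P m. multinom_term f k l) * tuple_sum f s (k + m) (M - m)"
      using fps_nth_power_eq_sum_multinom_term[OF f0, of k m] Suc.IH[of "k + m" "M - m"]
      by (simp only: g_def add.commute)
  qed simp
  also have "\<dots> = tuple_sum f (Suc s) k M"
    by (simp add: tuple_sum_Suc sum_distrib_right)
  finally show ?case .
qed

section \<open>Regrouping the tuples by their sum\<close>

lemma sum_prefix_sums: "(\<Sum>i=1..s. \<Sum>t=1..i-1. w t) = (\<Sum>t=1..s. (s - t) * (w t :: nat))"
proof (induction s)
  case (Suc s)
  have "(\<Sum>t=1..Suc s. (Suc s - t) * w t) = (\<Sum>t=1..s. (s - t) * w t + w t)"
    by (auto simp: sum.cl_ivl_Suc Suc_diff_le intro!: sum.cong)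
  then show ?case using Suc.IH by (simp add: sum.cl_ivl_Suc sum.distrib)
qed simp

lemma mi_decomp_eq_sum: "ls \<in> mi_decomp s L \<Longrightarrow> L = (\<lambda>p. \<Sum>t=1..s. ls t p)"
  unfolding mi_decomp_def by auto

lemma UN_mi_decomp_mi_P: "(\<Union>L\<in>mi_P m. mi_decomp s L) = mi_tuples s m"
proof safe
  fix L ls assume L: "L \<in> mi_P m" and ls: "ls \<in> mi_decomp s L"
  have "(\<Sum>t=1..s. mi_wt (ls t)) = mi_wt L"
    using mi_wt_sum[of "{1..s}" ls] ls mi_decomp_eq_sum[OF ls] by (simp add: mi_decomp_def)
  then show "ls \<in> mi_tuples s m"
    using ls mi_wt_mi_P[OF L] unfolding mi_decomp_def mi_tuples_def by simp
next
  fix ls assume ls: "ls \<in> mi_tuples s m"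
  define L where "L = (\<lambda>p. \<Sum>t=1..s. ls t p)"
  have "L \<in> mi_P m"
  proof (rule mi_PI)
    show "L 0 = 0" using ls by (simp add: L_def mi_tuples_def)
    show "finite {p. L p \<noteq> 0}" using ls by (auto simp: L_def mi_tuples_def)
    show "mi_wt L = m" using ls mi_wt_sum[of "{1..s}" ls] by (simp add: L_def mi_tuples_def)
  qed
  moreover have "ls \<in> mi_decomp s L" using ls by (simp add: mi_decomp_def mi_tuples_def L_def)
  ultimately show "ls \<in> (\<Union>L\<in>mi_P m. mi_decomp s L)" by blast
qed

lemma int_sum_multinom_exponents:
  assumes le: "\<And>i. i \<in> {1..s} \<Longrightarrow> mi_abs (ls i) \<le> (\<Sum>t=1..i-1. mi_wt (ls t)) + k"
    and fin: "\<And>t. t \<in> {1..s} \<Longrightarrow> finite {p. ls t p \<noteq> 0}"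
  shows "int (\<Sum>i=1..s. (\<Sum>t=1..i-1. mi_wt (ls t)) + k - mi_abs (ls i))
       = (\<Sum>t=1..s. int (s - t) * int (mi_wt (ls t))) + int s * int k - int (mi_abs (\<lambda>p. \<Sum>t=1..s. ls t p))"
proof -
  have "int (\<Sum>i=1..s. (\<Sum>t=1..i-1. mi_wt (ls t)) + k - mi_abs (ls i))
      = (\<Sum>i=1..s. int (\<Sum>t=1..i-1. mi_wt (ls t))) + int s * int k - (\<Sum>i=1..s. int (mi_abs (ls i)))"
    using le by (simp add: of_nat_sum of_nat_diff sum_subtractf sum.distrib)
  also have "(\<Sum>i=1..s. int (\<Sum>t=1..i-1. mi_wt (ls t))) = (\<Sum>t=1..s. int (s - t) * int (mi_wt (ls t)))"
    using arg_cong[OF sum_prefix_sums[where s = s and w = "\<lambda>t. mi_wt (ls t)"], of int] by (simp add: of_nat_sum)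
  also have "(\<Sum>i=1..s. int (mi_abs (ls i))) = int (mi_abs (\<lambda>p. \<Sum>t=1..s. ls t p))"
    using mi_abs_sum[of "{1..s}" ls] fin by (simp add: of_nat_sum)
  finally show ?thesis .
qed

lemma coeffC_summand_eq_tuple_term:
  assumes L: "L \<in> mi_P m" and ls: "ls \<in> mi_decomp s L"
  shows "fps_nth f 1 powi ((\<Sum>t=1..s. int (s - t) * int (mi_wt (ls t))) + int s * int k - int (mi_abs L))
      * (\<Prod>i=1..s. mi_multinom ((\<Sum>t=1..i-1. mi_wt (ls t)) + k) (ls i))
      * (\<Prod>p=1..m. fps_nth f (p + 1) ^ L p) = tuple_term f s k ls"
proof -
  define N where "N i = (\<Sum>t=1..i-1. mi_wt (ls t)) + k" for i
  define X where "X l = (\<Prod>p | l p \<noteq> 0. fps_nth f (p + 1) ^ l p)" for l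
  have fin: "\<And>t. t \<in> {1..s} \<Longrightarrow> finite {p. ls t p \<noteq> 0}" using ls by (simp add: mi_decomp_def)
  have L_eq: "L = (\<lambda>p. \<Sum>t=1..s. ls t p)" by (rule mi_decomp_eq_sum[OF ls])
  have tuple_term_eq: "tuple_term f s k ls = (\<Prod>i=1..s. mi_multinom (N i) (ls i))
      * (\<Prod>i=1..s. fps_nth f 1 ^ (N i - mi_abs (ls i))) * (\<Prod>i=1..s. X (ls i))"
    by (simp add: tuple_term_def multinom_term_def prod.distrib N_def X_def)
  have "(\<Prod>p=1..m. fps_nth f (p + 1) ^ L p) = X L"
    unfolding X_def by (rule prod_support_superset[symmetric]) (use mi_P_support[OF L] in auto)
  also have "\<dots> = (\<Prod>i=1..s. X (ls i))"
    unfolding X_def L_eq by (rule prod_power_support_sum) (use fin in auto)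
  finally have X_eq: "(\<Prod>p=1..m. fps_nth f (p + 1) ^ L p) = (\<Prod>i=1..s. X (ls i))" .
  show ?thesis
  proof (cases "\<exists>i\<in>{1..s}. mi_multinom (N i) (ls i) = 0")
    case True
    then show ?thesis by (simp add: tuple_term_eq N_def)
  next
    case False
    then have "mi_abs (ls i) \<le> N i" if "i \<in> {1..s}" for i
      using that mi_multinom_eq_0 by blast
    then have exponent: "int (\<Sum>i=1..s. N i - mi_abs (ls i))
        = (\<Sum>t=1..s. int (s - t) * int (mi_wt (ls t))) + int s * int k - int (mi_abs L)"
      unfolding N_def L_eq by (rule int_sum_multinom_exponents) (use fin in auto)
    have "fps_nth f 1 powi ((\<Sum>t=1..s. int (s - t) * int (mi_wt (ls t))) + int s * int k - int (mi_abs L))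
        = (\<Prod>i=1..s. fps_nth f 1 ^ (N i - mi_abs (ls i)))"
      by (simp only: power_int_of_nat power_sum flip: exponent)
    then show ?thesis by (simp only: tuple_term_eq X_eq N_def mult_ac)
  qed
qed

lemma sum_coeffC_eq_tuple_sum:
  "(\<Sum>L\<in>mi_P m. coeffC f s k L * (\<Prod>p=1..m. fps_nth f (p + 1) ^ L p)) = tuple_sum f s k m"
proof -
  have fin: "finite (mi_decomp s L)" if "L \<in> mi_P m" for L
  proof (rule finite_subset[OF _ finite_mi_tuples])
    show "mi_decomp s L \<subseteq> mi_tuples s m" using that UN_mi_decomp_mi_P[of s m] by blast
  qed
  have "(\<Sum>L\<in>mi_P m. coeffC f s k L * (\<Prod>p=1..m. fps_nth f (p + 1) ^ L p))
      = (\<Sum>L\<in>mi_P m. \<Sum>ls\<in>mi_decomp s L. tuple_term f s k ls)"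
    unfolding coeffC_def sum_distrib_right
    by (rule sum.cong[OF refl], rule sum.cong[OF refl], rule coeffC_summand_eq_tuple_term)
  also have "\<dots> = (\<Sum>ls\<in>(\<Union>L\<in>mi_P m. mi_decomp s L). tuple_term f s k ls)"
    by (rule sum.UNION_disjoint[symmetric]) (auto simp: finite_mi_P fin dest: mi_decomp_eq_sum)
  also have "\<dots> = tuple_sum f s k m"
    by (simp add: UN_mi_decomp_mi_P tuple_sum_def)
  finally show ?thesis .
qed

theorem mainTheorem4:
  fixes f :: "complex fps"
  assumes "fps_nth f 0 = 0" and "fps_nth f 1 \<noteq> 0"
  shows "\<forall>s n k. k \<le> n \<longrightarrow>
    phi_bracket f s n k = fact n / fact k *
      (\<Sum>L\<in>mi_P (n - k). coeffC f s k L * (\<Prod>p=1..n-k. (fps_nth f (p+1)) ^ L p))"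
proof (intro allI impI)
  fix s n k :: nat assume "k \<le> n"
  then have "fps_nth (fps_iter f s ^ k) n = tuple_sum f s k (n - k)"
    using fps_nth_iter_power[OF assms(1), of s k "n - k"] by simp
  moreover have "phi_bracket f s n k = fact n / fact k * fps_nth (fps_iter f s ^ k) n"
    by (simp add: phi_bracket_def)
  ultimately show "phi_bracket f s n k = fact n / fact k *
      (\<Sum>L\<in>mi_P (n - k). coeffC f s k L * (\<Prod>p=1..n-k. (fps_nth f (p+1)) ^ L p))"
    by (simp only: sum_coeffC_eq_tuple_sum)
qed

end
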